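(* Let $\theta\in\mathbb{R}$ and let $g\in L^2(\mathbb{R}^3)$ be even or odd. Then for all $(u,\alpha)\in L^2\oplus L^2$, $$\mathbf{D}_g(\theta)(u,\alpha)=\big(u(x)e^{-i\theta A_g(x)},\ \alpha(k)-i\theta g(k)F(|u|^2)(k)\big).$$
   Context: For $g\in L^2$, $\mathbf{D}_g(\theta)(u,\alpha)=(u_\theta,\alpha_\theta)$ with $u_\theta(x)=u(x)\exp\{-i\theta A_g(x)+i\theta^2\mathrm{Im}\int F(|u|^2)(k)|g(k)|^2e^{ik\cdot x}dk\}$ and $\alpha_\theta(k)=\alpha(k)-i\theta g(k)F(|u|^2)(k)$, where $A_g(x)=\int(g(k)\bar\alpha(k)e^{-ik\cdot x}+\bar g(k)\alpha(k)e^{ik\cdot x})dk$ and $F(|u|^2)(k)=\int e^{-ik\cdot x}|u(x)|^2dx$. *)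

theory Defs
  imports "HOL-Analysis.Analysis"
begin

type_synonym R3 = "real ^ 3"

definition L2 :: "(R3 \<Rightarrow> complex) \<Rightarrow> bool" where
  "L2 f \<longleftrightarrow> f \<in> borel_measurable lborel \<and> integrable lborel (\<lambda>x. (norm (f x))^2)"

definition FT :: "(R3 \<Rightarrow> real) \<Rightarrow> R3 \<Rightarrow> complex" where
  "FT h k = (LINT x|lborel. exp (- \<i> * complex_of_real (k \<bullet> x)) * complex_of_real (h x))"

definition A_g :: "(R3 \<Rightarrow> complex) \<Rightarrow> (R3 \<Rightarrow> complex) \<Rightarrow> R3 \<Rightarrow> complex" where
  "A_g g \<alpha> x = (LINT k|lborel. g k * cnj (\<alpha> k) * exp (- \<i> * complex_of_real (k \<bullet> x))
                               + cnj (g k) * \<alpha> k * exp (\<i> * complex_of_real (k \<bullet> x)))"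

definition D_g :: "(R3 \<Rightarrow> complex) \<Rightarrow> real \<Rightarrow> (R3 \<Rightarrow> complex) \<times> (R3 \<Rightarrow> complex)
                   \<Rightarrow> (R3 \<Rightarrow> complex) \<times> (R3 \<Rightarrow> complex)" where
  "D_g g \<theta> p = (case p of (u, \<alpha>) \<Rightarrow>
     ((\<lambda>x. u x * exp (- \<i> * complex_of_real \<theta> * A_g g \<alpha> x
              + \<i> * complex_of_real (\<theta>^2) *
                complex_of_real (Im (LINT k|lborel. FT (\<lambda>y. (norm (u y))^2) k
                                     * complex_of_real ((norm (g k))^2)
                                     * exp (\<i> * complex_of_real (k \<bullet> x)))))),
      (\<lambda>k. \<alpha> k - \<i> * complex_of_real \<theta> * g k * FT (\<lambda>y. (norm (u y))^2) k)))"

end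

theory Submission
  imports Defs
begin

text \<open>
  The two sides differ only by the phase
  theta^2 Im (INT k. F(|u|^2)(k) |g(k)|^2 e^(i k.x)).
  Since |u|^2 is real, F(|u|^2)(-k) is the conjugate of F(|u|^2)(k), and parity of g makes
  |g|^2 even; so the integrand Phi satisfies Phi(-k) = cnj (Phi k). Lebesgue measure is
  invariant under k \<mapsto> -k, hence the integral equals its own conjugate and is real.
\<close>

lemma lborel_distr_uminus_euclidean:
  "distr lborel borel uminus = (lborel :: 'a::euclidean_space measure)"
proof -
  have "lborel = density (distr lborel borel (\<lambda>x::'a. 0 + (-1) *\<^sub>R x)) (\<lambda>_. \<bar>-1::real\<bar>^DIM('a))"
    by (rule lborel_affine) simp
  then show ?thesis
    by (simp add: density_1 fun_Compl_def)
qed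

lemma lborel_integral_reflect:
  fixes f :: "'a::euclidean_space \<Rightarrow> 'b::{banach, second_countable_topology}"
  assumes "f \<in> borel_measurable borel"
  shows "(LINT x|lborel. f (- x)) = integral\<^sup>L lborel f"
proof -
  have "integral\<^sup>L (distr lborel borel uminus) f = (LINT x|lborel. f (- x))"
    by (rule integral_distr) (auto simp: assms)
  then show ?thesis
    by (simp add: lborel_distr_uminus_euclidean)
qed

lemma Im_lborel_integral_eq_0_if_hermitian:
  fixes \<Phi> :: "'a::euclidean_space \<Rightarrow> complex"
  assumes hermitian: "AE k in lborel. \<Phi> (- k) = cnj (\<Phi> k)"
  shows "Im (integral\<^sup>L lborel \<Phi>) = 0"
proof (cases "integrable lborel \<Phi>")
  case False
  then show ?thesis
    by (simp add: not_integrable_integral_eq)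
next
  case True
  then have meas: "\<Phi> \<in> borel_measurable borel"
    by (simp add: borel_measurable_integrable)
  have meas_cnj: "(\<lambda>k. cnj (\<Phi> k)) \<in> borel_measurable borel"
    by (rule borel_measurable_continuous_on[OF continuous_on_cnj[OF continuous_on_id] meas])
  have "cnj (integral\<^sup>L lborel \<Phi>) = (LINT k|lborel. cnj (\<Phi> k))"
    by simp
  also have "\<dots> = (LINT k|lborel. \<Phi> (- k))"
    using hermitian meas meas_cnj by (intro integral_cong_AE) auto
  also have "\<dots> = integral\<^sup>L lborel \<Phi>"
    using meas by (rule lborel_integral_reflect)
  finally show ?thesis
    by (metis Reals_cnj_iff complex_is_Real_iff)
qed

lemma FT_uminus: "FT h (- k) = cnj (FT h k)"
proof -
  have "cnj (FT h k) = (LINT x|lborel. cnj (exp (- \<i> * complex_of_real (k \<bullet> x)) * complex_of_real (h x)))"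
    unfolding FT_def by (simp only: Bochner_Integration.integral_cnj)
  also have "\<dots> = FT h (- k)"
    unfolding FT_def by (simp add: inner_minus_left exp_cnj)
  finally show ?thesis ..
qed

theorem lemma8:
  fixes \<theta> :: real and g u \<alpha> :: "R3 \<Rightarrow> complex"
  assumes "L2 g" and "L2 u" and "L2 \<alpha>"
    and "(AE k in lborel. g (- k) = g k) \<or> (AE k in lborel. g (- k) = - g k)"
  shows "D_g g \<theta> (u, \<alpha>) =
           ((\<lambda>x. u x * exp (- \<i> * complex_of_real \<theta> * A_g g \<alpha> x)),
            (\<lambda>k. \<alpha> k - \<i> * complex_of_real \<theta> * g k * FT (\<lambda>y. (norm (u y))^2) k))"
proof -
  have g_norm_even: "AE k in lborel. norm (g (- k)) = norm (g k)"
    using assms(4) by (auto elim: AE_mp)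
  have "Im (LINT k|lborel. FT (\<lambda>y. (norm (u y))^2) k * complex_of_real ((norm (g k))^2)
                             * exp (\<i> * complex_of_real (k \<bullet> x))) = 0" for x
    using g_norm_even
    by (intro Im_lborel_integral_eq_0_if_hermitian)
       (auto elim!: AE_mp simp: FT_uminus inner_minus_left exp_cnj)
  then show ?thesis
    unfolding D_g_def by simp
qed

end
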